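(* Let $n\ge2$, let $v_1,\dots,v_n$ be the standard unit vectors of $\mathbb R^n$ and $v_0=-\sum_{i=1}^nv_i$. For $i=0,\dots,n$ let $\ell_i>0$ and let $e_i$ be the segment from $0$ to $\ell_iv_i$. Let $f_i\colon e_i\to\mathbb R$ be smooth functions (one-sidedly smooth at the endpoints) with $f_0(0)=f_1(0)=\dots=f_n(0)$ and $\sum_{i=0}^n\frac{\partial f_i}{\partial v_i}(0)=0$, where $\frac{\partial}{\partial v_i}$ is the directional derivative. Then there exists a smooth function $f\colon\mathbb R^n\to\mathbb R$ with $f|_{e_i}=f_i$ for all $i$. *)

theory Defs
  imports "HOL-Analysis.Analysis"
begin

text \<open>C-infinity functions on a real normed vector space: differentiable everywhere, and every
  directional derivative function is again C-infinity (coinductively, i.e. to all orders).\<close>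
coinductive smooth_fun :: "('a::real_normed_vector \<Rightarrow> real) \<Rightarrow> bool" where
  "(\<forall>x. f differentiable (at x)) \<Longrightarrow>
   (\<forall>v. smooth_fun (\<lambda>x. frechet_derivative f (at x) v)) \<Longrightarrow> smooth_fun f"

definition smooth_on_interval :: "(real \<Rightarrow> real) \<Rightarrow> real \<Rightarrow> real \<Rightarrow> bool" where
  "smooth_on_interval g a b \<longleftrightarrow>
     (\<exists>D :: nat \<Rightarrow> real \<Rightarrow> real. (\<forall>x\<in>{a..b}. D 0 x = g x) \<and>
        (\<forall>k. \<forall>x\<in>{a..b}. (D k has_real_derivative D (Suc k) x) (at x within {a..b})))"

end

theory Submission
  imports Defs "HOL-Computational_Algebra.Polynomial"
begin

text \<open>Extend each f_i to a smooth function E_i on the whole line (Borel's lemma at both endpoints of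
  the segment; Borel's lemma itself is proved with rescaled Gaussians s^k exp(-s^2)). The sum
  of E_j(x_j) over the coordinates, minus (n-1) times the common value c, is correct on every
  positive axis. On the ray through v_0 all coordinates equal -t, and there it misses E_0(t) by
  H(t) = E_0(t) - sum_j E_j(-t) + (n-1) c. The two compatibility conditions say precisely that
  H(0) = H'(0) = 0, so Hadamard's lemma gives H(t) = t^2 K(t) with K smooth. For two distinct
  coordinates j1, j2 the correction x_j1 x_j2 K(-x_j1) vanishes on every axis and equals t^2 K(t)
  on the ray through v_0.\<close>

definition deriv_tower :: "(nat \<Rightarrow> real \<Rightarrow> real) \<Rightarrow> bool" where
  "deriv_tower D \<longleftrightarrow> (\<forall>k x. (D k has_real_derivative D (Suc k) x) (at x))"

lemma deriv_tower_affine: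
  assumes "deriv_tower D"
  shows "deriv_tower (\<lambda>k t. c * s ^ k * D k (s * t + p))"
  unfolding deriv_tower_def
proof (intro allI)
  fix k t
  have "((\<lambda>t. c * s ^ k * D k (s * t + p)) has_real_derivative c * s ^ k * (D (Suc k) (s * t + p) * s)) (at t)"
    using assms unfolding deriv_tower_def
    by (intro DERIV_cmult DERIV_chain2[where f = "D k"]) (auto intro!: derivative_eq_intros)
  then show "((\<lambda>t. c * s ^ k * D k (s * t + p)) has_real_derivative c * s ^ Suc k * D (Suc k) (s * t + p)) (at t)"
    by (simp add: algebra_simps)
qed

lemma deriv_tower_const: "deriv_tower (\<lambda>k t. if k = 0 then c else 0)"
  unfolding deriv_tower_def by (auto intro: DERIV_const)

lemma deriv_tower_add:
  assumes "deriv_tower D" "deriv_tower D'"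
  shows "deriv_tower (\<lambda>k t. D k t + D' k t)"
  using assms unfolding deriv_tower_def by (auto intro: DERIV_add)

lemma deriv_tower_sum:
  assumes "finite I" "\<And>i. i \<in> I \<Longrightarrow> deriv_tower (D i)"
  shows "deriv_tower (\<lambda>k t. \<Sum>i\<in>I. D i k t)"
  using assms by (induction I rule: finite_induct)
    (use deriv_tower_const[of 0] in \<open>auto intro: deriv_tower_add\<close>)

lemma deriv_tower_within:
  "deriv_tower D \<Longrightarrow> (D k has_real_derivative D (Suc k) x) (at x within S)"
  unfolding deriv_tower_def by (rule has_field_derivative_at_within) simp

text \<open>\<open>poly (gauss_poly k j) s * exp (- s\<^sup>2)\<close> is the j-th derivative of \<open>s ^ k * exp (- s\<^sup>2)\<close>.\<close>
fun gauss_poly :: "nat \<Rightarrow> nat \<Rightarrow> real poly" where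
  "gauss_poly k 0 = monom 1 k"
| "gauss_poly k (Suc j) = pderiv (gauss_poly k j) - [:0, 2:] * gauss_poly k j"

definition gauss_tower :: "nat \<Rightarrow> nat \<Rightarrow> real \<Rightarrow> real" where
  "gauss_tower k j s = poly (gauss_poly k j) s * exp (- (s\<^sup>2))"

lemma deriv_tower_gauss_tower: "deriv_tower (gauss_tower k)"
  unfolding deriv_tower_def gauss_tower_def
proof (intro allI)
  fix j s
  have "((\<lambda>s. poly (gauss_poly k j) s * exp (- (s\<^sup>2))) has_real_derivative
      poly (pderiv (gauss_poly k j)) s * exp (- (s\<^sup>2)) + poly (gauss_poly k j) s * (exp (- (s\<^sup>2)) * - (2 * s))) (at s)"
    by (auto intro!: derivative_eq_intros)
  then show "((\<lambda>s. poly (gauss_poly k j) s * exp (- (s\<^sup>2))) has_real_derivative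
      poly (gauss_poly k (Suc j)) s * exp (- (s\<^sup>2))) (at s)"
    by (simp add: algebra_simps)
qed

lemma coeff_gauss_poly_below:
  "i + j < k \<Longrightarrow> coeff (gauss_poly k j) i = 0"
proof (induction j arbitrary: i)
  case 0
  then show ?case by (simp add: coeff_monom)
next
  case (Suc j)
  then show ?case
    by (simp add: coeff_pderiv mult_pCons_left coeff_pCons split: nat.split)
qed

lemma coeff_gauss_poly_diag:
  "j \<le> k \<Longrightarrow> coeff (gauss_poly k j) (k - j) = fact k / fact (k - j)"
proof (induction j)
  case 0
  then show ?case by (simp add: coeff_monom)
next
  case (Suc j)
  then obtain r where r: "k - j = Suc r" and kr: "k - Suc j = r"
    by (metis Suc_diff_Suc Suc_le_lessD diff_Suc_Suc)
  have "coeff ([:0, 2:] * gauss_poly k j) r = 0"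
    using Suc.prems r by (simp add: mult_pCons_left coeff_pCons coeff_gauss_poly_below split: nat.split)
  then have "coeff (gauss_poly k (Suc j)) r = real (Suc r) * (fact k / fact (Suc r))"
    using Suc r by (simp add: coeff_pderiv del: of_nat_Suc)
  also have "\<dots> = fact k / fact r"
    by (simp add: field_simps del: of_nat_Suc)
  finally show ?case unfolding kr .
qed

lemma gauss_tower_at_0:
  "j < k \<Longrightarrow> gauss_tower k j 0 = 0" "gauss_tower k k 0 = fact k"
  using coeff_gauss_poly_diag[of k k]
  by (simp_all add: gauss_tower_def poly_0_coeff_0 coeff_gauss_poly_below)

lemma power_le_fact_mult_exp:
  fixes x :: real
  assumes "0 \<le> x"
  shows "x ^ n \<le> fact n * exp x"
proof -
  have "inverse (fact n) * x ^ n \<le> (\<Sum>m. inverse (fact m) * x ^ m)"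
    using sum_le_suminf[OF summable_exp, of "{n}" x] assms by (auto simp: zero_le_mult_iff)
  then show ?thesis by (simp add: exp_def field_simps)
qed

lemma abs_power_mult_gauss_le: "\<bar>s ^ i * exp (- (s\<^sup>2))\<bar> \<le> 1 + fact i"
  for s :: real
proof -
  have "\<bar>s\<bar> ^ i \<le> 1 + (s\<^sup>2) ^ i"
  proof (cases "\<bar>s\<bar> \<le> 1")
    case True
    then have "\<bar>s\<bar> ^ i \<le> 1" by (simp add: power_le_one)
    then show ?thesis by (simp add: add_increasing2)
  next
    case False
    then have "1 \<le> \<bar>s\<bar> ^ i" by (simp add: one_le_power)
    then have "\<bar>s\<bar> ^ i \<le> (\<bar>s\<bar> ^ i)\<^sup>2"
      unfolding power2_eq_square by (simp add: mult_le_cancel_left1)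
    also have "\<dots> = (s\<^sup>2) ^ i"
      by (metis power2_abs power_abs power_mult mult.commute)
    finally show ?thesis by simp
  qed
  also have "\<dots> \<le> 1 + fact i * exp (s\<^sup>2)" by (simp add: power_le_fact_mult_exp)
  finally have "\<bar>s ^ i\<bar> * exp (- (s\<^sup>2)) \<le> (1 + fact i * exp (s\<^sup>2)) * exp (- (s\<^sup>2))"
    by (simp add: power_abs)
  also have "\<dots> \<le> 1 + fact i" by (simp add: distrib_right exp_minus field_simps)
  finally show ?thesis by (simp add: abs_mult)
qed

lemma bounded_poly_mult_gauss:
  fixes p :: "real poly"
  shows "bounded (range (\<lambda>s. poly p s * exp (- (s\<^sup>2))))"
proof (rule boundedI)
  fix y assume "y \<in> range (\<lambda>s. poly p s * exp (- (s\<^sup>2)))"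
  then obtain s where y: "y = poly p s * exp (- (s\<^sup>2))" by blast
  have "\<bar>y\<bar> \<le> (\<Sum>i\<le>degree p. \<bar>coeff p i * (s ^ i * exp (- (s\<^sup>2)))\<bar>)"
    unfolding y poly_altdef sum_distrib_right by (rule order_trans[OF sum_abs]) (simp add: mult.assoc)
  also have "\<dots> \<le> (\<Sum>i\<le>degree p. \<bar>coeff p i\<bar> * (1 + fact i))"
    using abs_power_mult_gauss_le by (intro sum_mono) (simp add: abs_mult mult_left_mono)
  finally show "norm y \<le> (\<Sum>i\<le>degree p. \<bar>coeff p i\<bar> * (1 + fact i))" by simp
qed

lemma power_ratio_le_inverse:
  fixes L :: real
  assumes "1 \<le> L" "j < k"
  shows "L ^ j / L ^ k \<le> 1 / L"
proof -
  have "L ^ j / L ^ k = 1 / L ^ (k - j)"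
    using assms by (simp add: power_diff)
  also have "\<dots> \<le> 1 / L"
    using assms by (intro divide_left_mono) (auto intro: power_increasing[of 1, simplified])
  finally show ?thesis .
qed

lemma small_deriv_tower_with_jet:
  fixes c e :: real
  assumes "e > 0"
  shows "\<exists>h. deriv_tower h \<and> (\<forall>j<k. h j 0 = 0) \<and> h k 0 = c \<and> (\<forall>j<k. \<forall>t. \<bar>h j t\<bar> \<le> e)"
proof -
  have "bounded (\<Union>j<k. range (gauss_tower k j))"
    unfolding gauss_tower_def by (intro bounded_UN) (auto simp: bounded_poly_mult_gauss)
  then obtain M where M: "\<And>j s. j < k \<Longrightarrow> \<bar>gauss_tower k j s\<bar> \<le> M" and "M > 0"
    by (fastforce simp: bounded_pos)
  define L where "L = 1 + \<bar>c\<bar> * M / (fact k * e)"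
  have L: "L \<ge> 1"
    using assms \<open>M > 0\<close> by (simp add: L_def)
  define h where "h j t = c / (fact k * L ^ k) * L ^ j * gauss_tower k j (L * t)" for j t
  have "deriv_tower h"
    using deriv_tower_affine[OF deriv_tower_gauss_tower[of k], of "c / (fact k * L ^ k)" L 0]
    by (simp add: h_def[abs_def])
  moreover have "h k 0 = c" and "\<forall>j<k. h j 0 = 0"
    using L by (simp_all add: h_def gauss_tower_at_0)
  moreover have "\<bar>h j t\<bar> \<le> e" if "j < k" for j t
  proof -
    have "\<bar>h j t\<bar> = \<bar>c\<bar> / fact k * (L ^ j / L ^ k) * \<bar>gauss_tower k j (L * t)\<bar>"
      using L by (simp add: h_def abs_mult)
    also have "\<dots> \<le> \<bar>c\<bar> / fact k * (1 / L) * M"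
      using L M[OF that] power_ratio_le_inverse[OF L that] by (intro mult_mono) auto
    also have "\<dots> = (\<bar>c\<bar> * M / fact k) / L"
      by simp
    also have "\<dots> \<le> e"
    proof -
      have "e * L = e + \<bar>c\<bar> * M / fact k"
        using assms by (simp add: L_def field_simps)
      then have "\<bar>c\<bar> * M / fact k \<le> e * L"
        using assms by linarith
      then show ?thesis
        using L by (simp add: pos_divide_le_eq mult_ac)
    qed
    finally show ?thesis .
  qed
  ultimately show ?thesis by blast
qed

lemma deriv_tower_suminf:
  assumes towers: "\<And>k. deriv_tower (h k)"
    and bound: "\<And>j. \<forall>\<^sub>F k in sequentially. \<forall>t. \<bar>h k j t\<bar> \<le> B k"
    and "summable B"
  shows "deriv_tower (\<lambda>j t. \<Sum>k. h k j t)"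
  unfolding deriv_tower_def
proof (intro allI)
  fix j t
  have unif: "uniform_limit UNIV (\<lambda>n t. \<Sum>k<n. h k i t) (\<lambda>t. \<Sum>k. h k i t) sequentially" for i
    using bound[of i] \<open>summable B\<close> by (intro Weierstrass_m_test_ev) auto
  have "summable (\<lambda>k. h k j 0)"
    using tendsto_uniform_limitI[OF unif[of j], of 0] by (auto simp: summable_def sums_def)
  moreover have "uniformly_convergent_on UNIV (\<lambda>n t. \<Sum>k<n. h k (Suc j) t)"
    using unif[of "Suc j"] unfolding uniformly_convergent_on_def by blast
  ultimately show "((\<lambda>t. \<Sum>k. h k j t) has_real_derivative (\<Sum>k. h k (Suc j) t)) (at t)"
    using towers unfolding deriv_tower_def
    by (intro has_field_derivative_series'(2)[of UNIV "\<lambda>k. h k j" "\<lambda>k. h k (Suc j)" 0]) auto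
qed

text \<open>Course-of-values recursion: the m-th coefficient compensates the m-th derivatives at 0 of
  the earlier terms \<open>H k (borel_coeff H a k)\<close>, k < m, of the Borel series.\<close>
fun borel_coeff :: "(nat \<Rightarrow> real \<Rightarrow> nat \<Rightarrow> real \<Rightarrow> real) \<Rightarrow> (nat \<Rightarrow> real) \<Rightarrow> nat \<Rightarrow> real" where
  "borel_coeff H a m = a m - (\<Sum>k<m. H k (borel_coeff H a k) m 0)"
declare borel_coeff.simps [simp del]

lemma borel_tower: "\<exists>D. deriv_tower D \<and> (\<forall>k. D k 0 = a k)"
proof -
  have "\<forall>k c. \<exists>h. deriv_tower h \<and> (\<forall>j<k. h j 0 = 0) \<and> h k 0 = c \<and> (\<forall>j<k. \<forall>t. \<bar>h j t\<bar> \<le> (1/2) ^ k)"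
    by (intro allI small_deriv_tower_with_jet) simp
  then obtain H where H: "\<And>k c. deriv_tower (H k c)" "\<And>k c j. j < k \<Longrightarrow> H k c j 0 = 0"
      "\<And>k c. H k c k 0 = c" "\<And>k c j t. j < k \<Longrightarrow> \<bar>H k c j t\<bar> \<le> (1/2) ^ k"
    by metis
  define h where "h k = H k (borel_coeff H a k)" for k
  define D where "D j t = (\<Sum>k. h k j t)" for j t
  have "deriv_tower D"
    unfolding D_def[abs_def]
  proof (rule deriv_tower_suminf)
    show "\<forall>\<^sub>F k in sequentially. \<forall>t. \<bar>h k j t\<bar> \<le> (1/2) ^ k" for j
      unfolding eventually_sequentially h_def using H(4) by (intro exI[of _ "Suc j"]) auto
  qed (auto simp: h_def H(1))
  moreover have "D m 0 = a m" for m
  proof -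
    have "D m 0 = (\<Sum>k<Suc m. h k m 0)"
      unfolding D_def by (rule suminf_finite) (auto simp: h_def H(2))
    also have "\<dots> = a m"
      by (simp add: h_def H(3) borel_coeff.simps[of H a m])
    finally show ?thesis .
  qed
  ultimately show ?thesis by blast
qed

lemma borel_tower_at: "\<exists>D. deriv_tower D \<and> (\<forall>k. D k p = a k)"
proof -
  obtain D where D: "deriv_tower D" "\<And>k. D k 0 = a k"
    using borel_tower by blast
  have "deriv_tower (\<lambda>k t. D k (t - p))"
    using deriv_tower_affine[OF D(1), of 1 1 "- p"] by simp
  then show ?thesis
    using D(2) by (intro exI[of _ "\<lambda>k t. D k (t - p)"]) simp
qed

lemma has_real_derivative_within_closed_Un:
  assumes "closed S" "closed T"
    and "x \<in> S \<Longrightarrow> (f has_real_derivative d) (at x within S)"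
    and "x \<in> T \<Longrightarrow> (f has_real_derivative d) (at x within T)"
  shows "(f has_real_derivative d) (at x within S \<union> T)"
proof -
  have within_closed: "(f has_real_derivative d) (at x within A)"
    if "closed A" "x \<in> A \<Longrightarrow> (f has_real_derivative d) (at x within A)" for A
  proof (cases "x \<in> A")
    case False
    then have "at x within A = bot"
      using \<open>closed A\<close> closure_subset[of "A - {x}"] by (auto simp: at_within_eq_bot_iff closure_closed)
    then show ?thesis by simp
  qed (use that in simp)
  have "(f has_real_derivative d) (at x within S)" "(f has_real_derivative d) (at x within T)"
    using within_closed assms by auto
  then show ?thesis
    unfolding has_field_derivative_iff by (simp add: Lim_within_Un)
qed

lemma deriv_tower_extend_interval:
  assumes "a < b"
    and D: "\<And>k x. x \<in> {a..b} \<Longrightarrow> (D k has_real_derivative D (Suc k) x) (at x within {a..b})"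
  shows "\<exists>E. deriv_tower E \<and> (\<forall>k. \<forall>x\<in>{a..b}. E k x = D k x)"
proof -
  obtain A where A: "deriv_tower A" "\<And>k. A k a = D k a"
    using borel_tower_at[where p = a and a = "\<lambda>k. D k a"] by blast
  obtain B where B: "deriv_tower B" "\<And>k. B k b = D k b"
    using borel_tower_at[where p = b and a = "\<lambda>k. D k b"] by blast
  define E where "E k t = (if t < a then A k t else if t \<le> b then D k t else B k t)" for k t
  have EA: "\<forall>k. \<forall>t\<in>{..a}. E k t = A k t" and ED: "\<forall>k. \<forall>t\<in>{a..b}. E k t = D k t"
    and EB: "\<forall>k. \<forall>t\<in>{b..}. E k t = B k t"
    using \<open>a < b\<close> by (auto simp: E_def A(2) B(2))
  have "(E k has_real_derivative E (Suc k) t) (at t)" for k t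
  proof -
    have piece: "(E k has_real_derivative E (Suc k) t) (at t within S)"
      if "t \<in> S" "(F k has_real_derivative F (Suc k) t) (at t within S)" "\<forall>j. \<forall>x\<in>S. E j x = F j x"
      for S F
    proof -
      have "E (Suc k) t = F (Suc k) t" "\<And>x. x \<in> S \<Longrightarrow> E k x = F k x"
        using that(1,3) by blast+
      with that(1,2) show ?thesis
        unfolding has_field_derivative_def by (metis has_derivative_transform)
    qed
    have left: "t \<in> {..a} \<Longrightarrow> (E k has_real_derivative E (Suc k) t) (at t within {..a})"
      using deriv_tower_within[OF A(1)] EA by (intro piece[where F = A]) auto
    have middle: "t \<in> {a..b} \<Longrightarrow> (E k has_real_derivative E (Suc k) t) (at t within {a..b})"
      using D ED by (intro piece[where F = D]) auto
    have right: "t \<in> {b..} \<Longrightarrow> (E k has_real_derivative E (Suc k) t) (at t within {b..})"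
      using deriv_tower_within[OF B(1)] EB by (intro piece[where F = B]) auto
    have tail: "(E k has_real_derivative E (Suc k) t) (at t within {a..b} \<union> {b..})"
      by (rule has_real_derivative_within_closed_Un[OF closed_atLeastAtMost closed_atLeast middle right])
    have "(E k has_real_derivative E (Suc k) t) (at t within {..a} \<union> ({a..b} \<union> {b..}))"
      by (rule has_real_derivative_within_closed_Un[OF closed_atMost
            closed_Un[OF closed_atLeastAtMost closed_atLeast] left tail])
    moreover have "{..a} \<union> ({a..b} \<union> {b..}) = UNIV"
      using \<open>a < b\<close> by auto
    ultimately show ?thesis by simp
  qed
  then show ?thesis
    using ED unfolding deriv_tower_def by blast
qed

lemma smooth_on_interval_deriv_tower:
  assumes "a < b" "smooth_on_interval g a b" "(g has_real_derivative d) (at a within {a..b})"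
  shows "\<exists>E. deriv_tower E \<and> (\<forall>x\<in>{a..b}. E 0 x = g x) \<and> E 1 a = d"
proof -
  obtain D where D0: "\<forall>x\<in>{a..b}. D 0 x = g x"
    and D: "\<And>k x. x \<in> {a..b} \<Longrightarrow> (D k has_real_derivative D (Suc k) x) (at x within {a..b})"
    using assms(2) unfolding smooth_on_interval_def by blast
  obtain E where E: "deriv_tower E" "\<forall>k. \<forall>x\<in>{a..b}. E k x = D k x"
    using deriv_tower_extend_interval[where D = D, OF assms(1) D] by blast
  have "(E 0 has_real_derivative E 1 a) (at a within {a..b})"
    using deriv_tower_within[OF E(1), of 0] by simp
  then have "(g has_real_derivative E 1 a) (at a within {a..b})"
    unfolding has_field_derivative_def
    by (rule has_derivative_transform[rotated 2]) (use assms(1) E(2) D0 in auto)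
  then have "E 1 a = d"
    using assms(1,3) by (intro has_field_derivative_unique) (auto simp: at_within_Icc_at_right)
  then show ?thesis
    using E D0 by auto
qed

lemma hadamard_deriv_tower:
  assumes "deriv_tower D" "D 0 0 = 0"
  shows "\<exists>K. deriv_tower K \<and> K 0 0 = D 1 0 \<and> (\<forall>t. D 0 t = t * K 0 t)"
proof -
  have D: "\<And>k x. (D k has_real_derivative D (Suc k) x) (at x)"
    using assms(1) unfolding deriv_tower_def by blast
  have chain: "((\<lambda>t. D k (s * t)) has_real_derivative D (Suc k) (s * t) * s) (at t)" for k s t
    using DERIV_chain2[OF D, of "\<lambda>t. s * t" s] by (auto intro!: derivative_eq_intros)
  have cont: "continuous_on UNIV (D k)" for k
    using D by (intro continuous_at_imp_continuous_on ballI DERIV_isCont) blast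
  define K where "K k t = integral {0..1} (\<lambda>s. s ^ k * D (Suc k) (s * t))" for k t
  have "(K k has_real_derivative K (Suc k) t) (at t)" for k t
  proof -
    have "((\<lambda>t. integral (cbox 0 1) (\<lambda>s. s ^ k * D (Suc k) (s * t))) has_real_derivative
        integral (cbox 0 1) (\<lambda>s. s ^ Suc k * D (Suc (Suc k)) (s * t))) (at t within UNIV)"
    proof (rule leibniz_rule_field_derivative)
      show "((\<lambda>t. s ^ k * D (Suc k) (s * t)) has_real_derivative s ^ Suc k * D (Suc (Suc k)) (s * t))
          (at t within UNIV)" for t s
        using DERIV_cmult[OF chain, of "s ^ k" "Suc k" s t] by (simp add: algebra_simps)
      show "(\<lambda>s. s ^ k * D (Suc k) (s * t)) integrable_on cbox 0 1" for t
        by (intro integrable_continuous continuous_intros continuous_on_compose2[OF cont]) auto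
      show "continuous_on (UNIV \<times> cbox 0 1) (\<lambda>(t, s). s ^ Suc k * D (Suc (Suc k)) (s * t))"
        by (auto simp: case_prod_beta intro!: continuous_intros continuous_on_compose2[OF cont])
    qed auto
    then show ?thesis by (simp add: K_def[abs_def])
  qed
  moreover have "D 0 t = t * K 0 t" for t
  proof -
    have "((\<lambda>s. t * D 1 (s * t)) has_integral D 0 (1 * t) - D 0 (0 * t)) {0..1}"
      using chain[of 0 t] by (intro fundamental_theorem_of_calculus)
        (auto simp: has_real_derivative_iff_has_vector_derivative[symmetric] mult.commute
          intro: has_field_derivative_at_within)
    then have "((\<lambda>s. t * D 1 (s * t)) has_integral D 0 t) {0..1}"
      using assms(2) by simp
    from integral_unique[OF this] show ?thesis
      by (simp add: K_def)
  qed
  moreover have "K 0 0 = D 1 0"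
    by (simp add: K_def)
  ultimately show ?thesis
    unfolding deriv_tower_def by blast
qed

lemma hadamard_deriv_tower_square:
  assumes "deriv_tower D" "D 0 0 = 0" "D 1 0 = 0"
  shows "\<exists>K. deriv_tower K \<and> (\<forall>t. D 0 t = t\<^sup>2 * K 0 t)"
proof -
  obtain K where K: "deriv_tower K" "K 0 0 = 0" "\<And>t. D 0 t = t * K 0 t"
    using hadamard_deriv_tower[OF assms(1,2)] assms(3) by auto
  obtain K' where "deriv_tower K'" "\<And>t. K 0 t = t * K' 0 t"
    using hadamard_deriv_tower[OF K(1,2)] by auto
  then show ?thesis
    using K(3) by (metis mult.assoc power2_eq_square)
qed

lemma diagonal_defect_deriv_tower:
  fixes E :: "'j \<Rightarrow> nat \<Rightarrow> real \<Rightarrow> real"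
  assumes "finite J" "deriv_tower E0" "\<And>j. j \<in> J \<Longrightarrow> deriv_tower (E j)"
    and "\<And>j. j \<in> J \<Longrightarrow> E j 0 0 = E0 0 0" and "E0 1 0 + (\<Sum>j\<in>J. E j 1 0) = 0"
  shows "\<exists>K. deriv_tower K \<and>
    (\<forall>t. E0 0 t = (\<Sum>j\<in>J. E j 0 (- t)) + (1 - real (card J)) * E0 0 0 + t\<^sup>2 * K 0 t)"
proof -
  define c where "c = (real (card J) - 1) * E0 0 0"
  define H where "H k t = E0 k t + ((\<Sum>j\<in>J. (- 1) ^ Suc k * E j k (- t)) +
    (if k = 0 then c else 0))" for k t
  have "deriv_tower (\<lambda>k t. (- 1) ^ Suc k * E j k (- t))" if "j \<in> J" for j
    using deriv_tower_affine[OF assms(3)[OF that], of "- 1" "- 1" 0] by simp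
  then have "deriv_tower H"
    unfolding H_def[abs_def] using assms(1,2)
    by (intro deriv_tower_add deriv_tower_sum deriv_tower_const)
  moreover have "H 0 0 = 0" "H 1 0 = 0"
    using assms(4,5) by (simp_all add: H_def c_def algebra_simps)
  ultimately obtain K where "deriv_tower K" "\<And>t. H 0 t = t\<^sup>2 * K 0 t"
    using hadamard_deriv_tower_square by blast
  then show ?thesis
    by (intro exI[of _ K]) (auto simp: H_def c_def sum_negf algebra_simps)
qed

lemma smooth_fun_D:
  assumes "smooth_fun f"
  shows "f differentiable (at x)" "smooth_fun (\<lambda>x. frechet_derivative f (at x) v)"
  using assms by (auto elim: smooth_fun.cases)

lemma smooth_fun_const: "smooth_fun (\<lambda>x. c)"
proof (coinduction arbitrary: c rule: smooth_fun.coinduct)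
  case (smooth_fun c)
  have "frechet_derivative (\<lambda>x. c) (at x) = (\<lambda>v. 0)" for x :: 'a
    by (rule frechet_derivative_at[symmetric]) (rule has_derivative_const)
  then show ?case by (auto intro: exI[of _ 0])
qed

lemma smooth_fun_bounded_linear:
  assumes "bounded_linear L"
  shows "smooth_fun L"
proof (rule smooth_fun.intros)
  have "frechet_derivative L (at x) = L" for x
    using assms by (rule frechet_derivative_at[OF bounded_linear_imp_has_derivative, symmetric])
  then show "\<forall>v. smooth_fun (\<lambda>x. frechet_derivative L (at x) v)"
    by (simp add: smooth_fun_const)
  show "\<forall>x. L differentiable (at x)"
    using assms bounded_linear_imp_differentiable by blast
qed

text \<open>Products of smooth functions are not closed under differentiation, but finite sums of
  products are.\<close>
lemma has_derivative_sum_list_products: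
  assumes "\<forall>p\<in>set ps. smooth_fun (fst p) \<and> smooth_fun (snd p)"
  shows "((\<lambda>x. \<Sum>p\<leftarrow>ps. fst p x * snd p x) has_derivative
     (\<lambda>v. \<Sum>p\<leftarrow>ps. frechet_derivative (fst p) (at x) v * snd p x +
       fst p x * frechet_derivative (snd p) (at x) v)) (at x)"
  using assms
proof (induction ps)
  case Nil
  then show ?case by simp
next
  case (Cons p ps)
  have "(fst p has_derivative frechet_derivative (fst p) (at x)) (at x)"
    and "(snd p has_derivative frechet_derivative (snd p) (at x)) (at x)"
    using Cons.prems by (auto simp flip: frechet_derivative_works intro: smooth_fun_D)
  then have "((\<lambda>x. fst p x * snd p x + (\<Sum>p\<leftarrow>ps. fst p x * snd p x)) has_derivative
     (\<lambda>v. (fst p x * frechet_derivative (snd p) (at x) v + frechet_derivative (fst p) (at x) v * snd p x) +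
       (\<Sum>p\<leftarrow>ps. frechet_derivative (fst p) (at x) v * snd p x + fst p x * frechet_derivative (snd p) (at x) v))) (at x)"
    using Cons by (intro has_derivative_add has_derivative_mult) auto
  then show ?case by (simp add: algebra_simps)
qed

lemma smooth_fun_sum_list_products:
  assumes "\<forall>p\<in>set ps. smooth_fun (fst p) \<and> smooth_fun (snd p)"
  shows "smooth_fun (\<lambda>x. \<Sum>p\<leftarrow>ps. fst p x * snd p x)"
  using assms
proof (coinduction arbitrary: ps rule: smooth_fun.coinduct)
  case (smooth_fun ps)
  note deriv = has_derivative_sum_list_products[OF smooth_fun]
  have "\<exists>qs. (\<lambda>x. frechet_derivative (\<lambda>x. \<Sum>p\<leftarrow>ps. fst p x * snd p x) (at x) v) = (\<lambda>x. \<Sum>q\<leftarrow>qs. fst q x * snd q x)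
      \<and> (\<forall>q\<in>set qs. smooth_fun (fst q) \<and> smooth_fun (snd q))" for v
  proof (intro exI conjI)
    let ?qs = "map (\<lambda>p. (\<lambda>x. frechet_derivative (fst p) (at x) v, snd p)) ps @
      map (\<lambda>p. (fst p, \<lambda>x. frechet_derivative (snd p) (at x) v)) ps"
    show "(\<lambda>x. frechet_derivative (\<lambda>x. \<Sum>p\<leftarrow>ps. fst p x * snd p x) (at x) v) = (\<lambda>x. \<Sum>q\<leftarrow>?qs. fst q x * snd q x)"
      by (simp add: frechet_derivative_at[OF deriv, symmetric] sum_list_addf o_def)
    show "\<forall>q\<in>set ?qs. smooth_fun (fst q) \<and> smooth_fun (snd q)"
      using smooth_fun by (fastforce intro: smooth_fun_D(2))
  qed
  moreover have "\<forall>x. (\<lambda>x. \<Sum>p\<leftarrow>ps. fst p x * snd p x) differentiable (at x)"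
    using deriv by (auto simp: differentiable_def)
  ultimately show ?case by blast
qed

lemma smooth_fun_mult: "smooth_fun f \<Longrightarrow> smooth_fun g \<Longrightarrow> smooth_fun (\<lambda>x. f x * g x)"
  using smooth_fun_sum_list_products[of "[(f, g)]"] by simp

lemma smooth_fun_add: "smooth_fun f \<Longrightarrow> smooth_fun g \<Longrightarrow> smooth_fun (\<lambda>x. f x + g x)"
  using smooth_fun_sum_list_products[of "[(f, \<lambda>x. 1), (g, \<lambda>x. 1)]"] by (simp add: smooth_fun_const)

lemma smooth_fun_sum:
  "finite I \<Longrightarrow> (\<And>i. i \<in> I \<Longrightarrow> smooth_fun (f i)) \<Longrightarrow> smooth_fun (\<lambda>x. \<Sum>i\<in>I. f i x)"
  by (induction I rule: finite_induct) (auto intro: smooth_fun_add smooth_fun_const)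

lemma smooth_fun_deriv_tower_comp:
  assumes "deriv_tower D" "bounded_linear L"
  shows "smooth_fun (\<lambda>x. D 0 (L x))"
  using assms(1)
proof (coinduction arbitrary: D rule: smooth_fun.coinduct)
  case (smooth_fun D)
  have deriv: "((\<lambda>x. D 0 (L x)) has_derivative (\<lambda>v. D 1 (L x) * L v)) (at x)" for x
    using smooth_fun assms(2) unfolding deriv_tower_def has_field_derivative_def
    by (auto intro: has_derivative_compose[where g = "D 0", OF bounded_linear_imp_has_derivative])
  have "deriv_tower (\<lambda>k. D (Suc k))"
    using smooth_fun by (simp add: deriv_tower_def)
  then have "deriv_tower (\<lambda>k t. L v * D (Suc k) t)" for v
    using deriv_tower_affine[of "\<lambda>k. D (Suc k)" "L v" 1 0] by simp
  moreover have "(\<lambda>x. frechet_derivative (\<lambda>x. D 0 (L x)) (at x) v) = (\<lambda>x. L v * D 1 (L x))" for v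
    by (simp add: frechet_derivative_at[OF deriv, symmetric] mult.commute)
  ultimately show ?case
    using deriv by (auto simp: differentiable_def)
qed

lemma smooth_fun_on_star:
  fixes E0 :: "nat \<Rightarrow> real \<Rightarrow> real" and E :: "'n::finite \<Rightarrow> nat \<Rightarrow> real \<Rightarrow> real"
  assumes "CARD('n) \<ge> 2" "deriv_tower E0" "\<And>j. deriv_tower (E j)"
    and "\<And>j. E j 0 0 = E0 0 0" and "E0 1 0 + (\<Sum>j\<in>UNIV. E j 1 0) = 0"
  shows "\<exists>f :: real ^ 'n \<Rightarrow> real. smooth_fun f \<and>
           (\<forall>t. f (t *\<^sub>R (- (\<Sum>j\<in>UNIV. axis j 1))) = E0 0 t) \<and>
           (\<forall>j t. f (t *\<^sub>R axis j 1) = E j 0 t)"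
proof -
  define c where "c = (1 - real CARD('n)) * E0 0 0"
  obtain K where K: "deriv_tower K"
    and defect: "\<And>t. E0 0 t = (\<Sum>j\<in>UNIV. E j 0 (- t)) + c + t\<^sup>2 * K 0 t"
    using diagonal_defect_deriv_tower[of UNIV E0 E] assms(2-5) by (auto simp: c_def)
  obtain j1 j2 :: 'n where "j1 \<noteq> j2"
    using assms(1) card_le_Suc0_iff_eq[of "UNIV :: 'n set"] by fastforce
  define f where "f x = (\<Sum>j\<in>UNIV. E j 0 (x $ j)) + c + x $ j1 * x $ j2 * K 0 (- x $ j1)"
    for x :: "real ^ 'n"
  have "smooth_fun f"
    unfolding f_def[abs_def] using assms(3) K
    by (intro smooth_fun_add smooth_fun_mult smooth_fun_sum smooth_fun_const smooth_fun_bounded_linear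
        smooth_fun_deriv_tower_comp bounded_linear_vec_nth bounded_linear_minus) auto
  moreover have "f (t *\<^sub>R (- (\<Sum>j\<in>UNIV. axis j 1))) = E0 0 t" for t
  proof -
    have coord: "(t *\<^sub>R (- (\<Sum>j\<in>UNIV. axis j 1)) :: real ^ 'n) $ i = - t" for i
      by (simp add: axis_def)
    show ?thesis
      unfolding f_def coord by (simp add: defect power2_eq_square)
  qed
  moreover have "f (t *\<^sub>R axis j 1) = E j 0 t" for j t
  proof -
    have coord: "(t *\<^sub>R axis j 1 :: real ^ 'n) $ i = (if i = j then t else 0)" for i
      by (simp add: axis_def)
    have "(\<Sum>i\<in>UNIV. E i 0 (if i = j then t else 0)) = E j 0 t + (\<Sum>i\<in>UNIV - {j}. E i 0 0)"
      by (subst sum.remove[of UNIV j]) auto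
    also have "(\<Sum>i\<in>UNIV - {j}. E i 0 0) = - c"
      using assms(1,4) by (simp add: c_def card_Diff_singleton of_nat_diff algebra_simps)
    finally show ?thesis
      using \<open>j1 \<noteq> j2\<close> unfolding f_def coord by auto
  qed
  ultimately show ?thesis by blast
qed

theorem lemma4p11:
  fixes l0 :: real and l :: "'n::finite \<Rightarrow> real"
    and f0 :: "real \<Rightarrow> real" and fs :: "'n \<Rightarrow> real \<Rightarrow> real"
    and d0 :: real and d :: "'n \<Rightarrow> real"
  assumes "CARD('n) \<ge> 2"
    and "l0 > 0" and "\<And>j. l j > 0"
    and "smooth_on_interval f0 0 l0" and "\<And>j. smooth_on_interval (fs j) 0 (l j)"
    and "\<And>j. fs j 0 = f0 0"
    and "(f0 has_real_derivative d0) (at 0 within {0..l0})"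
    and "\<And>j. (fs j has_real_derivative d j) (at 0 within {0..l j})"
    and "d0 + (\<Sum>j\<in>UNIV. d j) = 0"
  shows "\<exists>f :: real ^ 'n \<Rightarrow> real. smooth_fun f \<and>
           (\<forall>t\<in>{0..l0}. f (t *\<^sub>R (- (\<Sum>j\<in>UNIV. axis j 1))) = f0 t) \<and>
           (\<forall>j. \<forall>t\<in>{0..l j}. f (t *\<^sub>R axis j 1) = fs j t)"
proof -
  obtain E0 where E0: "deriv_tower E0" "\<forall>x\<in>{0..l0}. E0 0 x = f0 x" "E0 1 0 = d0"
    using smooth_on_interval_deriv_tower[OF assms(2,4,7)] by blast
  obtain E where E: "\<And>j. deriv_tower (E j)" "\<And>j. \<forall>x\<in>{0..l j}. E j 0 x = fs j x" "\<And>j. E j 1 0 = d j"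
    using smooth_on_interval_deriv_tower[OF assms(3,5,8)] by metis
  have same_start: "E j 0 0 = E0 0 0" for j
    using E(2)[of j] E0(2) assms(2,3,6) by (simp add: less_imp_le)
  have "E0 1 0 + (\<Sum>j\<in>UNIV. E j 1 0) = 0"
    using E0(3) E(3) assms(9) by simp
  then obtain f :: "real ^ 'n \<Rightarrow> real" where "smooth_fun f" "\<forall>t. f (t *\<^sub>R (- (\<Sum>j\<in>UNIV. axis j 1))) = E0 0 t"
      "\<forall>j t. f (t *\<^sub>R axis j 1) = E j 0 t"
    using smooth_fun_on_star[where E = E, OF assms(1) E0(1) E(1) same_start] by blast
  then show ?thesis
    using E0(2) E(2) by auto
qed

end
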